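(* If $\Gamma_G$ is population monotonic, then $G$ has no induced subgraph isomorphic to the cycle $C_4$.
   Context: $G=(V,E;w)$ is a finite simple graph with edge weights $w:E\to\mathbb{R}$, $w_e>0$ for all $e\in E$. The matching game on $G$ is the cooperative game $\Gamma_G=(N,\gamma)$ with player set $N=V$ and, for $S\subseteq N$, $\gamma(S)$ equal to the maximum weight of a matching in the induced subgraph $G[S]$ (so $\gamma(\emptyset)=0$). A population monotonic allocation scheme (PMAS) is a family $(\boldsymbol{x}_S)_{\emptyset\neq S\subseteq N}$ with $\boldsymbol{x}_S=(x_{S,i})_{i\in S}\in\mathbb{R}^S$ such that (efficiency) $\sum_{i\in S}x_{S,i}=\gamma(S)$ for every nonempty $S\subseteq N$, and (monotonicity) $x_{S,i}\le x_{T,i}$ whenever $\emptyset\ne S\subseteq T\subseteq N$ and $i\in S$. $\Gamma_G$ is called population monotonic if it admits a PMAS. *)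

theory Defs
  imports Complex_Main
begin

definition simple_graph :: "'a set \<Rightarrow> 'a set set \<Rightarrow> bool" where
  "simple_graph V E \<longleftrightarrow> finite V \<and> (\<forall>e\<in>E. e \<subseteq> V \<and> card e = 2)"

definition matching_in :: "'a set set \<Rightarrow> 'a set \<Rightarrow> 'a set set \<Rightarrow> bool" where
  "matching_in E S M \<longleftrightarrow> M \<subseteq> E \<and> (\<forall>e\<in>M. e \<subseteq> S) \<and>
     (\<forall>e1\<in>M. \<forall>e2\<in>M. e1 \<noteq> e2 \<longrightarrow> e1 \<inter> e2 = {})"

(* characteristic function of the matching game: maximum weight of a matching in G[S] *)
definition gamma :: "'a set set \<Rightarrow> ('a set \<Rightarrow> real) \<Rightarrow> 'a set \<Rightarrow> real" where
  "gamma E w S = Max ((\<lambda>M. sum w M) ` {M. matching_in E S M})"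

definition is_PMAS :: "'a set \<Rightarrow> 'a set set \<Rightarrow> ('a set \<Rightarrow> real) \<Rightarrow> ('a set \<Rightarrow> 'a \<Rightarrow> real) \<Rightarrow> bool" where
  "is_PMAS V E w x \<longleftrightarrow>
     (\<forall>S. S \<subseteq> V \<and> S \<noteq> {} \<longrightarrow> (\<Sum>i\<in>S. x S i) = gamma E w S) \<and>
     (\<forall>S T i. S \<noteq> {} \<and> S \<subseteq> T \<and> T \<subseteq> V \<and> i \<in> S \<longrightarrow> x S i \<le> x T i)"

definition population_monotonic :: "'a set \<Rightarrow> 'a set set \<Rightarrow> ('a set \<Rightarrow> real) \<Rightarrow> bool" where
  "population_monotonic V E w \<longleftrightarrow> (\<exists>x. is_PMAS V E w x)"

definition C4_adj :: "nat \<Rightarrow> nat \<Rightarrow> bool" where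
  "C4_adj i j \<longleftrightarrow> j = (i + 1) mod 4 \<or> i = (j + 1) mod 4"

definition has_induced_C4 :: "'a set \<Rightarrow> 'a set set \<Rightarrow> bool" where
  "has_induced_C4 V E \<longleftrightarrow> (\<exists>f. inj_on f {0..<4} \<and> f ` {0..<4} \<subseteq> V \<and>
     (\<forall>i<4. \<forall>j<4. ({f i, f j} \<in> E \<longleftrightarrow> C4_adj i j)))"

end

theory Submission
  imports Defs
begin

(* Let abcd be an induced 4-cycle, and let bc be an edge of minimum weight, so that a-b-c and
   b-c-d are induced paths. By efficiency, b and c receive together at least w{b,c} > 0 in the
   coalition {b,c}. In {a,b,c} the only edges are ab and bc, so the coalition is worth w{a,b};
   since a and b already receive at least w{a,b} in {a,b}, monotonicity leaves c a share of at most 0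
   in {a,b,c}, hence at most 0 in {b,c}. Symmetrically b receives at most 0 in {b,c},
   a contradiction. *)

lemma edge_endpoints:
  assumes "simple_graph V E" "{p, q} \<in> E"
  shows "p \<noteq> q" "p \<in> V" "q \<in> V"
  using assms unfolding simple_graph_def by (auto simp: card_2_iff doubleton_eq_iff)

lemma finite_matchings:
  assumes "finite S"
  shows "finite {M. matching_in E S M}"
proof -
  have "{M. matching_in E S M} \<subseteq> Pow (Pow S)" unfolding matching_in_def by auto
  thus ?thesis using assms by (meson finite_Pow_iff finite_subset)
qed

lemma finite_matching: "finite S \<Longrightarrow> matching_in E S M \<Longrightarrow> finite M"
  using finite_subset[of M "Pow S"] unfolding matching_in_def by auto

lemma matching_weight_le_gamma:
  assumes "finite S" "matching_in E S M"
  shows "sum w M \<le> gamma E w S"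
  unfolding gamma_def using assms finite_matchings[OF assms(1), of E] by auto

lemma gamma_le_bound:
  assumes "finite S" "\<And>M. matching_in E S M \<Longrightarrow> sum w M \<le> c"
  shows "gamma E w S \<le> c"
proof -
  have "matching_in E S {}" unfolding matching_in_def by auto
  thus ?thesis unfolding gamma_def
    using assms finite_matchings[OF assms(1), of E] by (subst Max_le_iff) auto
qed

lemma edge_weight_le_gamma: "{p, q} \<in> E \<Longrightarrow> w {p, q} \<le> gamma E w {p, q}"
  using matching_weight_le_gamma[of "{p, q}" E "{{p, q}}" w] unfolding matching_in_def by auto

lemma matching_card_le:
  assumes "simple_graph V E" "finite S" "matching_in E S M"
  shows "2 * card M \<le> card S"
proof -
  have edges: "M \<subseteq> E" "\<forall>e\<in>M. e \<subseteq> S" and disj: "pairwise disjnt M"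
    using assms(3) unfolding matching_in_def pairwise_def disjnt_def by auto
  have fin: "finite M" using finite_matching[OF assms(2,3)] .
  have "\<forall>e\<in>M. card e = 2" using assms(1) edges unfolding simple_graph_def by auto
  hence "card (\<Union>M) = 2 * card M"
    using card_Union_disjoint[OF disj] fin by (simp add: card_ge_0_finite)
  moreover have "\<Union>M \<subseteq> S" using edges by auto
  ultimately show ?thesis using card_mono[OF assms(2)] by metis
qed

lemma gamma_induced_path_le:
  assumes sg: "simple_graph V E" and pos: "\<forall>e\<in>E. 0 < w e"
    and pq: "{p, q} \<in> E" and npr: "{p, r} \<notin> E" and le: "w {q, r} \<le> w {p, q}"
  shows "gamma E w {p, q, r} \<le> w {p, q}"
proof (rule gamma_le_bound)
  fix M assume m: "matching_in E {p, q, r} M"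
  have "2 * card M \<le> card {p, q, r}" using matching_card_le[OF sg _ m] by simp
  also have "\<dots> \<le> 3" by (simp add: card_insert_le_m1)
  finally have "card M \<le> 1" by simp
  moreover have "finite M" using finite_matching[OF _ m] by simp
  ultimately consider "M = {}" | e where "M = {e}"
    using le_Suc_eq[of "card M" 0] card_1_singleton_iff[of M] by fastforce
  thus "sum w M \<le> w {p, q}"
  proof cases
    case 1 thus ?thesis using pos pq by force
  next
    case (2 e)
    with m have e: "e \<in> E" "e \<subseteq> {p, q, r}" unfolding matching_in_def by auto
    then obtain a b where ab: "e = {a, b}" "a \<noteq> b"
      using sg unfolding simple_graph_def by (meson card_2_iff)
    with e npr have "e = {p, q} \<or> e = {q, r}" by (auto simp: insert_commute)
    thus ?thesis using 2 le by auto
  qed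
qed simp

lemma is_PMAS_efficient:
  "is_PMAS V E w x \<Longrightarrow> S \<subseteq> V \<Longrightarrow> S \<noteq> {} \<Longrightarrow> (\<Sum>i\<in>S. x S i) = gamma E w S"
  unfolding is_PMAS_def by blast

lemma is_PMAS_mono:
  "is_PMAS V E w x \<Longrightarrow> i \<in> S \<Longrightarrow> S \<subseteq> T \<Longrightarrow> T \<subseteq> V \<Longrightarrow> x S i \<le> x T i"
  unfolding is_PMAS_def by blast

lemma PMAS_share_nonpos_at_induced_path_end:
  assumes sg: "simple_graph V E" and pos: "\<forall>e\<in>E. 0 < w e" and px: "is_PMAS V E w x"
    and pq: "{p, q} \<in> E" and qr: "{q, r} \<in> E" and npr: "{p, r} \<notin> E" and "p \<noteq> r"
    and le: "w {q, r} \<le> w {p, q}"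
  shows "x {q, r} r \<le> 0"
proof -
  have V: "{p, q, r} \<subseteq> V" and "p \<noteq> q" "q \<noteq> r"
    using edge_endpoints[OF sg pq] edge_endpoints[OF sg qr] by auto
  with \<open>p \<noteq> r\<close> have "x {p, q, r} p + x {p, q, r} q + x {p, q, r} r = gamma E w {p, q, r}"
    using is_PMAS_efficient[OF px V] by simp
  also have "\<dots> \<le> w {p, q}" using gamma_induced_path_le[OF sg pos pq npr le] .
  also have "\<dots> \<le> x {p, q} p + x {p, q} q"
    using edge_weight_le_gamma[OF pq, of w] is_PMAS_efficient[OF px, of "{p, q}"] V \<open>p \<noteq> q\<close>
    by simp
  also have "\<dots> \<le> x {p, q, r} p + x {p, q, r} q"
    using is_PMAS_mono[OF px _ _ V, of _ "{p, q}"] by (simp add: add_mono)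
  finally have "x {p, q, r} r \<le> 0" by simp
  moreover have "x {q, r} r \<le> x {p, q, r} r" using is_PMAS_mono[OF px _ _ V] by simp
  ultimately show ?thesis by simp
qed

lemma no_PMAS_induced_path4_light_middle:
  assumes sg: "simple_graph V E" and pos: "\<forall>e\<in>E. 0 < w e" and px: "is_PMAS V E w x"
    and pq: "{p, q} \<in> E" and qr: "{q, r} \<in> E" and rs: "{r, s} \<in> E"
    and npr: "{p, r} \<notin> E" and nqs: "{q, s} \<notin> E" and "p \<noteq> r" "q \<noteq> s"
    and le_left: "w {q, r} \<le> w {p, q}" and le_right: "w {q, r} \<le> w {r, s}"
  shows False
proof -
  have "x {q, r} r \<le> 0"
    using PMAS_share_nonpos_at_induced_path_end[OF sg pos px pq qr npr \<open>p \<noteq> r\<close> le_left] .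
  moreover have "x {q, r} q \<le> 0"
    using PMAS_share_nonpos_at_induced_path_end[OF sg pos px, of s r q] rs qr nqs \<open>q \<noteq> s\<close> le_right
    by (simp add: insert_commute)
  moreover have "x {q, r} q + x {q, r} r = gamma E w {q, r}"
    using is_PMAS_efficient[OF px, of "{q, r}"] edge_endpoints[OF sg qr] by simp
  moreover have "0 < w {q, r}" using pos qr by blast
  ultimately show False using edge_weight_le_gamma[OF qr, of w] by simp
qed

lemma has_induced_C4E:
  assumes "has_induced_C4 V E"
  obtains a b c d where "{a, b} \<in> E" "{b, c} \<in> E" "{c, d} \<in> E" "{d, a} \<in> E"
    "{a, c} \<notin> E" "{b, d} \<notin> E" "a \<noteq> c" "b \<noteq> d"
proof -
  obtain f where inj: "inj_on f {0..<4}"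
    and adj: "\<forall>i<4. \<forall>j<4. {f i, f j} \<in> E \<longleftrightarrow> C4_adj i j"
    using assms unfolding has_induced_C4_def by blast
  have "f 0 \<noteq> f 2" "f 1 \<noteq> f 3" using inj_onD[OF inj, of 0 2] inj_onD[OF inj, of 1 3] by auto
  with adj show thesis by (intro that[of "f 0" "f 1" "f 2" "f 3"]) (auto simp: C4_adj_def)
qed

theorem mainTheorem8:
  fixes V :: "'a set" and E :: "'a set set" and w :: "'a set \<Rightarrow> real"
  assumes "simple_graph V E"
    and "\<forall>e\<in>E. w e > 0"
    and "population_monotonic V E w"
  shows "\<not> has_induced_C4 V E"
proof
  assume "has_induced_C4 V E"
  then obtain a b c d where E: "{a, b} \<in> E" "{b, c} \<in> E" "{c, d} \<in> E" "{d, a} \<in> E"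
    and nE: "{a, c} \<notin> E" "{b, d} \<notin> E" and "a \<noteq> c" "b \<noteq> d"
    by (rule has_induced_C4E)
  obtain x where px: "is_PMAS V E w x"
    using assms(3) unfolding population_monotonic_def by blast
  note no_P4 = no_PMAS_induced_path4_light_middle[OF assms(1,2) px]
  consider "w {a, b} \<le> w {d, a}" "w {a, b} \<le> w {b, c}"
    | "w {b, c} \<le> w {a, b}" "w {b, c} \<le> w {c, d}"
    | "w {c, d} \<le> w {b, c}" "w {c, d} \<le> w {d, a}"
    | "w {d, a} \<le> w {c, d}" "w {d, a} \<le> w {a, b}"
    by linarith
  then show False
  proof cases
    case 1 with no_P4[of d a b c] E nE \<open>a \<noteq> c\<close> \<open>b \<noteq> d\<close> show False by (auto simp: insert_commute)
  next
    case 2 with no_P4[of a b c d] E nE \<open>a \<noteq> c\<close> \<open>b \<noteq> d\<close> show False by (auto simp: insert_commute)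
  next
    case 3 with no_P4[of b c d a] E nE \<open>a \<noteq> c\<close> \<open>b \<noteq> d\<close> show False by (auto simp: insert_commute)
  next
    case 4 with no_P4[of c d a b] E nE \<open>a \<noteq> c\<close> \<open>b \<noteq> d\<close> show False by (auto simp: insert_commute)
  qed
qed

end
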